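(* Let $n\ge 4$ and let $A$ be one of the following complex Leibniz algebras with basis $\{h_1,h_2,e_1,\dots,e_n\}$: (a) $R(F_n^1)$: nonzero products $[e_i,e_1]=e_{i+1}$ ($2\le i\le n-1$), $[e_1,h_2]=e_1$, $[h_2,e_1]=-e_1$, $[e_i,h_1]=e_i$ ($2\le i\le n$), $[e_i,h_2]=(i-1)e_i$ ($2\le i\le n$); (b) $\mathcal L_1$: nonzero products $[e_1,e_1]=e_3$, $[e_i,e_1]=e_{i+1}$ ($3\le i\le n-1$), $[e_1,h_2]=e_1$, $[h_2,e_1]=-e_1$, $[e_2,h_1]=e_2$, $[h_1,e_2]=-e_2$, $[e_i,h_2]=(i-1)e_i$ ($3\le i\le n$); (c) $\mathcal L_2$: the same products as $\mathcal L_1$ except $[h_1,e_2]=0$. Then every biderivation of $A$ is inner, i.e. of the form $(-\mathrm{ad}_x,\mathrm{Ad}_x)$ for some $x\in A$.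
   Context: Leibniz algebras are right Leibniz over $\mathbb C$: $[x,[y,z]]=[[x,y],z]-[[x,z],y]$. Unlisted products are zero. A derivation is a linear $d$ with $d([x,y])=[d(x),y]+[x,d(y)]$; an anti-derivation is a linear $D$ with $D([x,y])=[D(x),y]-[D(y),x]$; a biderivation is a pair $(d,D)$ of a derivation and an anti-derivation with $[x,d(y)]=[x,D(y)]$ for all $x,y$. For $x\in A$, $\mathrm{ad}_x(y)=[y,x]$, $\mathrm{Ad}_x(y)=[x,y]$; $(-\mathrm{ad}_x,\mathrm{Ad}_x)$ is called an inner biderivation. *)

theory Defs
  imports Complex_Main
begin

text \<open>Basis labels: H1 = h_1, H2 = h_2, E i = e_i (1 \<le> i \<le> n).
  Elements of the (n+2)-dimensional algebra are coordinate functions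
  basis \<Rightarrow> complex supported on the basis set.\<close>

datatype basis = H1 | H2 | E nat

definition bas :: "nat \<Rightarrow> basis set" where
  "bas n = {H1, H2} \<union> E ` {1..n}"

definition vecs :: "nat \<Rightarrow> (basis \<Rightarrow> complex) set" where
  "vecs n = {v. \<forall>b. b \<notin> bas n \<longrightarrow> v b = 0}"

definition ev :: "basis \<Rightarrow> basis \<Rightarrow> complex" where
  "ev b = (\<lambda>k. if k = b then 1 else 0)"

definition scl :: "complex \<Rightarrow> (basis \<Rightarrow> complex) \<Rightarrow> basis \<Rightarrow> complex" where
  "scl c v = (\<lambda>k. c * v k)"

definition vadd :: "(basis \<Rightarrow> complex) \<Rightarrow> (basis \<Rightarrow> complex) \<Rightarrow> basis \<Rightarrow> complex" where
  "vadd u v = (\<lambda>k. u k + v k)"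

definition vsub :: "(basis \<Rightarrow> complex) \<Rightarrow> (basis \<Rightarrow> complex) \<Rightarrow> basis \<Rightarrow> complex" where
  "vsub u v = (\<lambda>k. u k - v k)"

definition vneg :: "(basis \<Rightarrow> complex) \<Rightarrow> basis \<Rightarrow> complex" where
  "vneg u = (\<lambda>k. - u k)"

text \<open>Structure constants: s a b = [a,b] for basis labels a, b (unlisted products zero).\<close>

definition RF :: "nat \<Rightarrow> basis \<Rightarrow> basis \<Rightarrow> basis \<Rightarrow> complex" where
  "RF n a b = (case a of
     E i \<Rightarrow> (case b of
        E j \<Rightarrow> (if j = 1 \<and> 2 \<le> i \<and> i \<le> n - 1 then ev (E (i + 1)) else (\<lambda>_. 0))
      | H1 \<Rightarrow> (if 2 \<le> i \<and> i \<le> n then ev (E i) else (\<lambda>_. 0))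
      | H2 \<Rightarrow> (if i = 1 then ev (E 1)
               else if 2 \<le> i \<and> i \<le> n then scl (of_nat (i - 1)) (ev (E i))
               else (\<lambda>_. 0)))
   | H2 \<Rightarrow> (case b of E j \<Rightarrow> (if j = 1 then vneg (ev (E 1)) else (\<lambda>_. 0)) | _ \<Rightarrow> (\<lambda>_. 0))
   | H1 \<Rightarrow> (\<lambda>_. 0))"

text \<open>(b),(c): common shape; flag True gives L_1 (with [h_1,e_2] = -e_2),
  False gives L_2 (with [h_1,e_2] = 0).\<close>
definition Lgen :: "bool \<Rightarrow> nat \<Rightarrow> basis \<Rightarrow> basis \<Rightarrow> basis \<Rightarrow> complex" where
  "Lgen flag n a b = (case a of
     E i \<Rightarrow> (case b of
        E j \<Rightarrow> (if j = 1 \<and> i = 1 then ev (E 3)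
                else if j = 1 \<and> 3 \<le> i \<and> i \<le> n - 1 then ev (E (i + 1))
                else (\<lambda>_. 0))
      | H1 \<Rightarrow> (if i = 2 then ev (E 2) else (\<lambda>_. 0))
      | H2 \<Rightarrow> (if i = 1 then ev (E 1)
               else if 3 \<le> i \<and> i \<le> n then scl (of_nat (i - 1)) (ev (E i))
               else (\<lambda>_. 0)))
   | H2 \<Rightarrow> (case b of E j \<Rightarrow> (if j = 1 then vneg (ev (E 1)) else (\<lambda>_. 0)) | _ \<Rightarrow> (\<lambda>_. 0))
   | H1 \<Rightarrow> (case b of E j \<Rightarrow> (if flag \<and> j = 2 then vneg (ev (E 2)) else (\<lambda>_. 0)) | _ \<Rightarrow> (\<lambda>_. 0)))"

definition L1 :: "nat \<Rightarrow> basis \<Rightarrow> basis \<Rightarrow> basis \<Rightarrow> complex" where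
  "L1 n = Lgen True n"

definition L2 :: "nat \<Rightarrow> basis \<Rightarrow> basis \<Rightarrow> basis \<Rightarrow> complex" where
  "L2 n = Lgen False n"

definition br :: "nat \<Rightarrow> (basis \<Rightarrow> basis \<Rightarrow> basis \<Rightarrow> complex)
    \<Rightarrow> (basis \<Rightarrow> complex) \<Rightarrow> (basis \<Rightarrow> complex) \<Rightarrow> basis \<Rightarrow> complex" where
  "br n s x y = (\<lambda>k. \<Sum>a\<in>bas n. \<Sum>b\<in>bas n. x a * y b * s a b k)"

definition lin :: "nat \<Rightarrow> ((basis \<Rightarrow> complex) \<Rightarrow> basis \<Rightarrow> complex) \<Rightarrow> bool" where
  "lin n f \<longleftrightarrow> (\<forall>v\<in>vecs n. f v \<in> vecs n)
     \<and> (\<forall>u\<in>vecs n. \<forall>v\<in>vecs n. f (vadd u v) = vadd (f u) (f v))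
     \<and> (\<forall>c. \<forall>v\<in>vecs n. f (scl c v) = scl c (f v))"

definition is_derivation where
  "is_derivation n s d \<longleftrightarrow> lin n d \<and>
     (\<forall>x\<in>vecs n. \<forall>y\<in>vecs n. d (br n s x y) = vadd (br n s (d x) y) (br n s x (d y)))"

definition is_antiderivation where
  "is_antiderivation n s D \<longleftrightarrow> lin n D \<and>
     (\<forall>x\<in>vecs n. \<forall>y\<in>vecs n. D (br n s x y) = vsub (br n s (D x) y) (br n s (D y) x))"

definition is_biderivation where
  "is_biderivation n s d D \<longleftrightarrow> is_derivation n s d \<and> is_antiderivation n s D \<and>
     (\<forall>x\<in>vecs n. \<forall>y\<in>vecs n. br n s x (d y) = br n s x (D y))"

text \<open>Inner biderivation (-ad_x, Ad_x) with ad_x(y) = [y,x], Ad_x(y) = [x,y].\<close>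
definition is_inner_biderivation where
  "is_inner_biderivation n s d D \<longleftrightarrow> (\<exists>x\<in>vecs n. \<forall>y\<in>vecs n.
     d y = vneg (br n s y x) \<and> D y = br n s x y)"

end

theory Submission
  imports Defs
begin

text \<open>Evaluated on pairs of basis vectors, the Leibniz rule pins a derivation \<open>d\<close> down to a few
  scalars: for instance \<open>d(h\<^sub>2) = \<beta> e\<^sub>1\<close> and, for all but the first \<open>e\<^sub>i\<close>,
  \<open>d(e\<^sub>i) = \<lambda>\<^sub>i e\<^sub>i - \<beta> e\<^sub>i\<^sub>+\<^sub>1\<close> with \<open>\<lambda>\<^sub>i\<close> affine in \<open>i\<close>,
  because the distinct eigenvalues of right multiplication by \<open>h\<^sub>2\<close> separate the coordinates.
  The condition \<open>[x, d y] = [x, D y]\<close> makes \<open>D\<close> agree with \<open>d\<close> on the coordinates that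
  left multiplication detects, and the anti-Leibniz rule expresses the remaining coordinates of
  \<open>D\<close> through \<open>D(h\<^sub>1)\<close> and \<open>D(h\<^sub>2)\<close>. An element \<open>x\<close> assembled from these
  scalars satisfies \<open>d = -ad\<^sub>x\<close> and \<open>D = Ad\<^sub>x\<close> on the basis, hence everywhere by
  linearity.\<close>

section \<open>Coordinates and the bilinear bracket\<close>

lemma bas_iff [simp]: "H1 \<in> bas n" "H2 \<in> bas n" "E i \<in> bas n \<longleftrightarrow> 1 \<le> i \<and> i \<le> n"
  by (auto simp: bas_def)

lemma finite_bas [simp]: "finite (bas n)"
  by (simp add: bas_def)

lemma ev_in_vecs [simp]: "b \<in> bas n \<Longrightarrow> ev b \<in> vecs n"
  by (auto simp: vecs_def ev_def)

lemma ev_apply: "ev b k = (if k = b then 1 else 0)"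
  by (simp add: ev_def)

lemma scl_apply [simp]: "scl c v k = c * v k"
  and vneg_apply [simp]: "vneg v k = - v k"
  and vadd_apply [simp]: "vadd u v k = u k + v k"
  and vsub_apply [simp]: "vsub u v k = u k - v k"
  by (simp_all add: scl_def vneg_def vadd_def vsub_def)

lemma vecs_eq_sum_ev: "v \<in> vecs n \<Longrightarrow> v = (\<lambda>k. \<Sum>b\<in>bas n. v b * ev b k)"
  by (rule ext) (auto simp: vecs_def ev_def if_distrib[of "\<lambda>x. _ * x"] cong: if_cong)

lemma lin_in_vecs: "lin n f \<Longrightarrow> v \<in> vecs n \<Longrightarrow> f v \<in> vecs n"
  by (simp add: lin_def)

lemma lin_add: "lin n f \<Longrightarrow> u \<in> vecs n \<Longrightarrow> v \<in> vecs n \<Longrightarrow> f (vadd u v) = vadd (f u) (f v)"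
  by (simp add: lin_def)

lemma lin_scl: "lin n f \<Longrightarrow> v \<in> vecs n \<Longrightarrow> f (scl c v) = scl c (f v)"
  by (simp add: lin_def)

lemma lin_zero: "lin n f \<Longrightarrow> f (\<lambda>_. 0) = (\<lambda>_. 0)"
  using lin_scl[of n f "\<lambda>_. 0" 0] by (simp add: scl_def vecs_def)

lemma lin_vneg: "lin n f \<Longrightarrow> v \<in> vecs n \<Longrightarrow> f (vneg v) = vneg (f v)"
  using lin_scl[of n f v "-1"] by (simp add: scl_def vneg_def)

lemma lin_outside_bas: "lin n f \<Longrightarrow> v \<in> vecs n \<Longrightarrow> k \<notin> bas n \<Longrightarrow> f v k = 0"
  using lin_in_vecs by (fastforce simp: vecs_def)

lemma lin_sum_ev:
  assumes "lin n f" "finite S" "S \<subseteq> bas n"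
  shows "f (\<lambda>k. \<Sum>b\<in>S. v b * ev b k) = (\<lambda>k. \<Sum>b\<in>S. v b * f (ev b) k)"
  using assms(2,3)
proof (induction S rule: finite_induct)
  case empty
  then show ?case using lin_zero[OF assms(1)] by simp
next
  case (insert b S)
  have b: "b \<in> bas n" and S: "S \<subseteq> bas n" using insert.prems by auto
  have sum_insert: "(\<lambda>k. \<Sum>b\<in>insert b S. v b * w b k) = vadd (scl (v b) (w b)) (\<lambda>k. \<Sum>b\<in>S. v b * w b k)"
    for w :: "basis \<Rightarrow> basis \<Rightarrow> complex"
    using insert.hyps by (auto simp: vadd_def scl_def)
  have "(\<lambda>k. \<Sum>b\<in>S. v b * ev b k) \<in> vecs n"
    using S by (auto simp: vecs_def ev_def intro!: sum.neutral)
  moreover have "scl (v b) (ev b) \<in> vecs n"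
    using b by (auto simp: vecs_def ev_def)
  ultimately have "f (vadd (scl (v b) (ev b)) (\<lambda>k. \<Sum>b\<in>S. v b * ev b k))
      = vadd (scl (v b) (f (ev b))) (\<lambda>k. \<Sum>b\<in>S. v b * f (ev b) k)"
    using lin_add[OF assms(1)] lin_scl[OF assms(1) ev_in_vecs[OF b]] insert.IH[OF S] by simp
  then show ?case
    by (simp only: sum_insert)
qed

lemma lin_apply_eq_sum: "lin n f \<Longrightarrow> v \<in> vecs n \<Longrightarrow> f v k = (\<Sum>b\<in>bas n. v b * f (ev b) k)"
  using lin_sum_ev[of n f "bas n" v] vecs_eq_sum_ev[of v n] by (metis finite_bas order_refl)

lemma br_ev_left: "br n s (ev a) x k = (\<Sum>b\<in>bas n. x b * s a b k)" if a: "a \<in> bas n"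
proof -
  have "br n s (ev a) x k = (\<Sum>a'\<in>bas n. if a' = a then (\<Sum>b\<in>bas n. x b * s a b k) else 0)"
    unfolding br_def ev_def by (rule sum.cong) auto
  then show ?thesis
    using a by simp
qed

lemma br_ev_right: "br n s x (ev b) k = (\<Sum>a\<in>bas n. x a * s a b k)" if b: "b \<in> bas n"
proof -
  have "(\<Sum>b'\<in>bas n. x a * ev b b' * s a b' k) = x a * s a b k" for a
  proof -
    have "(\<Sum>b'\<in>bas n. x a * ev b b' * s a b' k) = (\<Sum>b'\<in>bas n. if b' = b then x a * s a b k else 0)"
      by (rule sum.cong) (auto simp: ev_def)
    then show ?thesis
      using b by simp
  qed
  then show ?thesis
    by (simp add: br_def)
qed

lemma br_ev_ev: "br n s (ev a) (ev b) = s a b" if a: "a \<in> bas n" and b: "b \<in> bas n"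
proof (rule ext)
  fix k
  have "br n s (ev a) (ev b) k = (\<Sum>b'\<in>bas n. if b' = b then s a b k else 0)"
    unfolding br_ev_left[OF a] by (rule sum.cong) (auto simp: ev_def)
  then show "br n s (ev a) (ev b) k = s a b k"
    using b by simp
qed

lemma br_eq_sum_left: "br n s y x k = (\<Sum>b\<in>bas n. y b * br n s (ev b) x k)"
proof -
  have "(\<Sum>b\<in>bas n. y b * br n s (ev b) x k) = (\<Sum>b\<in>bas n. y b * (\<Sum>b'\<in>bas n. x b' * s b b' k))"
    by (rule sum.cong) (simp_all add: br_ev_left)
  then show ?thesis
    by (simp add: br_def sum_distrib_left mult.assoc)
qed

lemma br_eq_sum_right: "br n s x y k = (\<Sum>b\<in>bas n. y b * br n s x (ev b) k)"
proof -
  have "br n s x y k = (\<Sum>b\<in>bas n. \<Sum>a\<in>bas n. x a * y b * s a b k)"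
    unfolding br_def by (rule sum.swap)
  then show ?thesis
    by (simp add: br_ev_right sum_distrib_left algebra_simps)
qed

lemma inner_biderivationI:
  assumes "lin n d" "lin n D" "x \<in> vecs n"
    and "\<And>b k. b \<in> bas n \<Longrightarrow> d (ev b) k = - br n s (ev b) x k"
    and "\<And>b k. b \<in> bas n \<Longrightarrow> D (ev b) k = br n s x (ev b) k"
  shows "is_inner_biderivation n s d D"
  unfolding is_inner_biderivation_def
proof (intro bexI[OF _ assms(3)] ballI conjI ext)
  fix y k assume y: "y \<in> vecs n"
  show "d y k = vneg (br n s y x) k"
    using lin_apply_eq_sum[OF assms(1) y, of k] br_eq_sum_left[of n s y x k] assms(4)
    by (simp add: sum_negf[symmetric])
  show "D y k = br n s x y k"
    using lin_apply_eq_sum[OF assms(2) y, of k] br_eq_sum_right[of n s x y k] assms(5)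
    by simp
qed

lemma derivation_ev:
  assumes "is_derivation n s d" "a \<in> bas n" "b \<in> bas n"
  shows "d (s a b) k = br n s (d (ev a)) (ev b) k + br n s (ev a) (d (ev b)) k"
  using assms unfolding is_derivation_def by (simp flip: br_ev_ev[OF assms(2,3)])

lemma antiderivation_ev:
  assumes "is_antiderivation n s D" "a \<in> bas n" "b \<in> bas n"
  shows "D (s a b) k = br n s (D (ev a)) (ev b) k - br n s (D (ev b)) (ev a) k"
  using assms unfolding is_antiderivation_def by (simp flip: br_ev_ev[OF assms(2,3)])

lemma two_weights_eq:
  fixes x1 x2 y1 y2 :: "'a::comm_ring_1"
  assumes "x1 + x2 = y1 + y2" "x1 + 2 * x2 = y1 + 2 * y2"
  shows "x1 = y1 \<and> x2 = y2"
proof -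
  have "x2 = y2"
    using arg_cong2[OF assms(2) assms(1), of "(-)"] by (simp add: algebra_simps)
  then show ?thesis
    using assms(1) by simp
qed

lemma weight_eq_solve:
  fixes z c :: "'a::{idom,ring_char_0}"
  assumes "of_nat p * z = of_nat q * z + (if q = Suc p then c else 0)" "p \<noteq> q"
  shows "z = (if q = Suc p then - c else 0)"
proof (cases "q = Suc p")
  case True
  then show ?thesis
    using assms(1) by (simp add: algebra_simps eq_neg_iff_add_eq_0)
next
  case False
  then have "(of_nat p - of_nat q) * z = 0"
    using assms(1) by (simp add: algebra_simps)
  then show ?thesis
    using assms(2) False by simp
qed

lemma arith_progression_closed_form:
  fixes f :: "nat \<Rightarrow> 'a::semiring_1"
  assumes step: "\<And>i. m \<le> i \<Longrightarrow> i < n \<Longrightarrow> f (Suc i) = f i + a" and "m \<le> i" "i \<le> n"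
  shows "f i = f m + of_nat (i - m) * a"
  using assms(2,3)
proof (induction i rule: dec_induct)
  case (step i)
  then show ?case
    using assms(1)[of i] by (simp add: Suc_diff_le algebra_simps)
qed simp

lemma double_sum_indicator:
  fixes u v :: "_ \<Rightarrow> 'a::comm_semiring_1"
  assumes "finite S" "finite T"
  shows "(\<Sum>a\<in>S. \<Sum>b\<in>T. u a * v b * (if a = A \<and> b = B then c else 0)) =
     (if A \<in> S \<and> B \<in> T then u A * v B * c else 0)"
proof -
  have "(\<Sum>a\<in>S. \<Sum>b\<in>T. u a * v b * (if a = A \<and> b = B then c else 0)) =
        (\<Sum>a\<in>S. if a = A then (\<Sum>b\<in>T. u a * v b * (if b = B then c else 0)) else 0)"
    by (rule sum.cong) auto
  also have "\<dots> = (if A \<in> S \<and> B \<in> T then u A * v B * c else 0)"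
    using assms by (simp add: sum.delta if_distrib[of "\<lambda>x. _ * x"] cong: if_cong)
  finally show ?thesis .
qed

lemma double_sum_add:
  fixes u v :: "_ \<Rightarrow> 'a::comm_ring"
  shows "(\<Sum>a\<in>S. \<Sum>b\<in>T. u a * v b * (f a b + g a b)) =
   (\<Sum>a\<in>S. \<Sum>b\<in>T. u a * v b * f a b) + (\<Sum>a\<in>S. \<Sum>b\<in>T. u a * v b * g a b)"
  and double_sum_diff:
  "(\<Sum>a\<in>S. \<Sum>b\<in>T. u a * v b * (f a b - g a b)) =
   (\<Sum>a\<in>S. \<Sum>b\<in>T. u a * v b * f a b) - (\<Sum>a\<in>S. \<Sum>b\<in>T. u a * v b * g a b)"
  by (simp_all add: distrib_left right_diff_distrib sum.distrib sum_subtractf)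

lemma RF_E:
  "RF n a b (E j) =
     (if a = E 1 \<and> b = H2 then (if j = 1 then 1 else 0) else 0)
   - (if a = H2 \<and> b = E 1 then (if j = 1 then 1 else 0) else 0)
   + (if a = E j \<and> b = H1 then (if 2 \<le> j \<and> j \<le> n then 1 else 0) else 0)
   + (if a = E j \<and> b = H2 then (if 2 \<le> j \<and> j \<le> n then of_nat (j - 1) else 0) else 0)
   + (if a = E (j - 1) \<and> b = E 1 then (if 3 \<le> j \<and> j \<le> n then 1 else 0) else 0)"
  by (auto simp: RF_def ev_def scl_def vneg_def split: basis.split)

lemma RF_H [simp]: "RF n a b H1 = 0" "RF n a b H2 = 0"
  by (auto simp: RF_def ev_def scl_def vneg_def split: basis.split)

lemma br_RF:
  "br n (RF n) u v k = (case k of H1 \<Rightarrow> 0 | H2 \<Rightarrow> 0 | E j \<Rightarrow>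
     (if j = 1 \<and> 1 \<le> n then u (E 1) * v H2 - u H2 * v (E 1) else 0)
   + (if 2 \<le> j \<and> j \<le> n then u (E j) * (v H1 + of_nat (j - 1) * v H2) else 0)
   + (if 3 \<le> j \<and> j \<le> n then u (E (j - 1)) * v (E 1) else 0))"
proof (cases k)
  case (E j)
  have "br n (RF n) u v (E j) = (\<Sum>a\<in>bas n. \<Sum>b\<in>bas n. u a * v b * RF n a b (E j))"
    by (simp add: br_def)
  also have "\<dots> = (if j = 1 \<and> 1 \<le> n then u (E 1) * v H2 - u H2 * v (E 1) else 0)
   + (if 2 \<le> j \<and> j \<le> n then u (E j) * (v H1 + of_nat (j - 1) * v H2) else 0)
   + (if 3 \<le> j \<and> j \<le> n then u (E (j - 1)) * v (E 1) else 0)"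
    unfolding RF_E double_sum_add double_sum_diff double_sum_indicator[OF finite_bas finite_bas]
    by (cases "j = 1"; cases "j = 2"; cases "3 \<le> j"; cases "j \<le> n") (auto simp: algebra_simps)
  finally show ?thesis
    using E by simp
qed (simp_all add: br_def)

lemma Lgen_E:
  "Lgen f n a b (E j) =
     (if a = E 1 \<and> b = H2 then (if j = 1 then 1 else 0) else 0)
   - (if a = H2 \<and> b = E 1 then (if j = 1 then 1 else 0) else 0)
   + (if a = E 2 \<and> b = H1 then (if j = 2 then 1 else 0) else 0)
   - (if a = H1 \<and> b = E 2 then (if j = 2 \<and> f then 1 else 0) else 0)
   + (if a = E 1 \<and> b = E 1 then (if j = 3 then 1 else 0) else 0)
   + (if a = E j \<and> b = H2 then (if 3 \<le> j \<and> j \<le> n then of_nat (j - 1) else 0) else 0)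
   + (if a = E (j - 1) \<and> b = E 1 then (if 4 \<le> j \<and> j \<le> n then 1 else 0) else 0)"
  by (auto simp: Lgen_def ev_def scl_def vneg_def split: basis.split)

lemma Lgen_H [simp]: "Lgen f n a b H1 = 0" "Lgen f n a b H2 = 0"
  by (auto simp: Lgen_def ev_def scl_def vneg_def split: basis.split)

lemma br_Lgen:
  assumes "4 \<le> n"
  shows "br n (Lgen f n) u v k = (case k of H1 \<Rightarrow> 0 | H2 \<Rightarrow> 0 | E j \<Rightarrow>
     (if j = 1 then u (E 1) * v H2 - u H2 * v (E 1) else 0)
   + (if j = 2 then u (E 2) * v H1 - (if f then u H1 * v (E 2) else 0) else 0)
   + (if j = 3 then u (E 1) * v (E 1) else 0)
   + (if 3 \<le> j \<and> j \<le> n then of_nat (j - 1) * u (E j) * v H2 else 0)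
   + (if 4 \<le> j \<and> j \<le> n then u (E (j - 1)) * v (E 1) else 0))"
proof (cases k)
  case (E j)
  have "br n (Lgen f n) u v (E j) = (\<Sum>a\<in>bas n. \<Sum>b\<in>bas n. u a * v b * Lgen f n a b (E j))"
    by (simp add: br_def)
  also have "\<dots> = (if j = 1 then u (E 1) * v H2 - u H2 * v (E 1) else 0)
   + (if j = 2 then u (E 2) * v H1 - (if f then u H1 * v (E 2) else 0) else 0)
   + (if j = 3 then u (E 1) * v (E 1) else 0)
   + (if 3 \<le> j \<and> j \<le> n then of_nat (j - 1) * u (E j) * v H2 else 0)
   + (if 4 \<le> j \<and> j \<le> n then u (E (j - 1)) * v (E 1) else 0)"
  proof -
    have "j = 0 \<or> j = 1 \<or> j = 2 \<or> j = 3 \<or> (4 \<le> j \<and> j \<le> n) \<or> n < j"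
      by arith
    then show ?thesis
      unfolding Lgen_E double_sum_add double_sum_diff double_sum_indicator[OF finite_bas finite_bas]
      using assms by (elim disjE) (simp_all add: algebra_simps, arith)
  qed
  finally show ?thesis
    using E by simp
qed (simp_all add: br_def)


section \<open>Biderivations of \<open>R(F\<^sub>n\<^sup>1)\<close>\<close>

locale RF_derivation =
  fixes n :: nat and d :: "(basis \<Rightarrow> complex) \<Rightarrow> basis \<Rightarrow> complex"
  assumes n_ge_4: "4 \<le> n" and derivation: "is_derivation n (RF n) d"
begin

lemma lin_d: "lin n d"
  using derivation by (simp add: is_derivation_def)

lemma d_outside_bas: "b \<in> bas n \<Longrightarrow> k \<notin> bas n \<Longrightarrow> d (ev b) k = 0"
  using lin_outside_bas[OF lin_d] by simp

lemmas leibniz = derivation_ev[OF derivation]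

lemmas RF_simps = br_RF lin_scl[OF lin_d] lin_zero[OF lin_d] lin_vneg[OF lin_d] RF_def ev_apply

definition \<alpha> where "\<alpha> = d (ev (E 1)) (E 1)"
definition \<beta> where "\<beta> = d (ev H2) (E 1)"
definition \<gamma> where "\<gamma> = d (ev (E 2)) (E 2)"

lemma d_H1: "d (ev H1) k = 0"
proof -
  have "d (ev H1) H1 + d (ev H1) H2 = 0 + 0" "d (ev H1) H1 + 2 * d (ev H1) H2 = 0 + 2 * 0"
    using leibniz[of "E 2" H1 "E 2"] leibniz[of "E 3" H1 "E 3"] n_ge_4
    by (simp_all add: RF_simps cong: if_cong)
  then have on_H: "d (ev H1) H1 = 0" "d (ev H1) H2 = 0"
    using two_weights_eq by blast+
  have on_E1: "d (ev H1) (E 1) = 0"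
    using leibniz[of H1 H2 "E 1"] n_ge_4 by (simp add: RF_simps cong: if_cong)
  have on_E: "d (ev H1) (E j) = 0" if "2 \<le> j" "j \<le> n" for j
    using leibniz[of H1 H1 "E j"] n_ge_4 that by (simp add: RF_simps cong: if_cong)
  show ?thesis
  proof (cases k)
    case (E j)
    then show ?thesis
      using on_E1 on_E[of j] d_outside_bas[of H1 k] by (cases "j = 1"; cases "2 \<le> j"; cases "j \<le> n") auto
  qed (use on_H in simp_all)
qed

lemma d_H2: "d (ev H2) k = (if k = E 1 then \<beta> else 0)"
proof -
  have "d (ev H2) H1 + d (ev H2) H2 = 0 + 0" "d (ev H2) H1 + 2 * d (ev H2) H2 = 0 + 2 * 0"
    using leibniz[of "E 2" H2 "E 2"] leibniz[of "E 3" H2 "E 3"] n_ge_4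
    by (simp_all add: RF_simps cong: if_cong)
  then have on_H: "d (ev H2) H1 = 0" "d (ev H2) H2 = 0"
    using two_weights_eq by blast+
  have on_E: "d (ev H2) (E j) = 0" if "2 \<le> j" "j \<le> n" for j
    using leibniz[of H2 H2 "E j"] n_ge_4 that by (simp add: RF_simps cong: if_cong)
  show ?thesis
  proof (cases k)
    case (E j)
    then show ?thesis
      using on_E[of j] d_outside_bas[of H2 k] by (cases "j = 1"; cases "2 \<le> j"; cases "j \<le> n") (auto simp: \<beta>_def)
  qed (use on_H in simp_all)
qed

lemma d_E1: "d (ev (E 1)) k = (if k = E 1 then \<alpha> else 0)"
proof -
  have on_H: "d (ev (E 1)) H1 = 0" "d (ev (E 1)) H2 = 0"
    using leibniz[of "E 1" H2 H1] leibniz[of "E 1" H2 H2] n_ge_4 by (simp_all add: RF_simps cong: if_cong)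
  have on_E: "d (ev (E 1)) (E j) = 0" if "2 \<le> j" "j \<le> n" for j
    using leibniz[of "E 1" H1 "E j"] n_ge_4 that by (simp add: RF_simps d_H1 cong: if_cong)
  show ?thesis
  proof (cases k)
    case (E j)
    then show ?thesis
      using on_E[of j] d_outside_bas[of "E 1" k] n_ge_4
      by (cases "j = 1"; cases "2 \<le> j"; cases "j \<le> n") (auto simp: \<alpha>_def)
  qed (use on_H in simp_all)
qed

lemma d_E_H_E1: "d (ev (E i)) H1 = 0" "d (ev (E i)) H2 = 0" "d (ev (E i)) (E 1) = 0"
  if "2 \<le> i" "i \<le> n" for i
  using leibniz[of "E i" H1 H1] leibniz[of "E i" H1 H2] leibniz[of "E i" H1 "E 1"] n_ge_4 that
  by (simp_all add: RF_simps d_H1 cong: if_cong)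

lemma d_E_diagonal: "d (ev (E i)) (E i) = \<gamma> + of_nat (i - 2) * \<alpha>" if "2 \<le> i" "i \<le> n"
proof -
  have "d (ev (E (Suc i))) (E (Suc i)) = d (ev (E i)) (E i) + \<alpha>" if "2 \<le> i" "i < n" for i
  proof -
    have "i \<le> n - 1"
      using that by simp
    then show ?thesis
      using leibniz[of "E i" "E 1" "E (i + 1)"] n_ge_4 that by (simp add: RF_simps d_E1 \<alpha>_def cong: if_cong)
  qed
  then show ?thesis
    using arith_progression_closed_form[of 2 n "\<lambda>i. d (ev (E i)) (E i)" \<alpha> i] that
    by (simp add: \<gamma>_def)
qed

lemma d_E_off_diagonal: "d (ev (E i)) (E j) = (if j = i + 1 then - \<beta> else 0)"
  if "2 \<le> i" "i \<le> n" "2 \<le> j" "j \<le> n" "j \<noteq> i"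
proof -
  have "of_nat (i - 1) * d (ev (E i)) (E j)
      = of_nat (j - 1) * d (ev (E i)) (E j) + (if j - 1 = Suc (i - 1) then \<beta> else 0)"
    using leibniz[of "E i" H2 "E j"] n_ge_4 that by (auto simp add: RF_simps d_H2 cong: if_cong)
  from weight_eq_solve[OF this] that show ?thesis
    by auto
qed

lemma d_E: "d (ev (E i)) k = (if k = E i then \<gamma> + of_nat (i - 2) * \<alpha>
    else if k = E (i + 1) \<and> i + 1 \<le> n then - \<beta> else 0)"
  if "2 \<le> i" "i \<le> n"
proof (cases k)
  case (E j)
  show ?thesis
  proof (cases "1 \<le> j \<and> j \<le> n")
    case False
    then show ?thesis
      using d_outside_bas[of "E i" k] that E by auto
  next
    case True
    then show ?thesis
      using d_E_H_E1[OF that] d_E_diagonal[OF that] d_E_off_diagonal[OF that, of j] E that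
      by (cases "j = 1"; cases "j = i") auto
  qed
qed (use d_E_H_E1[OF that] in simp_all)

lemma d_on_H_E1:
  assumes "b \<in> bas n"
  shows "d (ev b) H1 = 0" "d (ev b) H2 = 0" "d (ev b) (E 1) = (if b = H2 then \<beta> else if b = E 1 then \<alpha> else 0)"
proof -
  have "d (ev b) H1 = 0 \<and> d (ev b) H2 = 0 \<and>
    d (ev b) (E 1) = (if b = H2 then \<beta> else if b = E 1 then \<alpha> else 0)"
  proof (cases b)
    case (E i)
    then show ?thesis
      using assms d_E1[of H1] d_E1[of H2] d_E1[of "E 1"] d_E_H_E1[of i] by (cases "i = 1") auto
  qed (simp_all add: d_H1 d_H2)
  then show "d (ev b) H1 = 0" "d (ev b) H2 = 0"
    "d (ev b) (E 1) = (if b = H2 then \<beta> else if b = E 1 then \<alpha> else 0)"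
    by blast+
qed

end

locale RF_biderivation =
  fixes n :: nat and d D :: "(basis \<Rightarrow> complex) \<Rightarrow> basis \<Rightarrow> complex"
  assumes n_ge_4: "4 \<le> n" and biderivation: "is_biderivation n (RF n) d D"
begin

sublocale RF_derivation n d
  using n_ge_4 biderivation by unfold_locales (simp_all add: is_biderivation_def)

lemma antiderivation: "is_antiderivation n (RF n) D"
  using biderivation by (simp add: is_biderivation_def)

lemma lin_D: "lin n D"
  using antiderivation by (simp add: is_antiderivation_def)

lemma compatible: "x \<in> vecs n \<Longrightarrow> y \<in> vecs n \<Longrightarrow> br n (RF n) x (d y) k = br n (RF n) x (D y) k"
  using biderivation by (simp add: is_biderivation_def)

lemmas anti_leibniz = antiderivation_ev[OF antiderivation]

lemmas RF_D_simps = br_RF lin_scl[OF lin_D] lin_zero[OF lin_D] lin_vneg[OF lin_D] RF_def ev_apply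

text \<open>Brackets from the left with \<open>e\<^sub>2\<close> and \<open>e\<^sub>3\<close> see exactly the
  \<open>h\<^sub>1\<close>-, \<open>h\<^sub>2\<close>- and \<open>e\<^sub>1\<close>-coordinates.\<close>
lemma D_eq_d_on_H_E1:
  assumes "b \<in> bas n"
  shows "D (ev b) H1 = d (ev b) H1" "D (ev b) H2 = d (ev b) H2" "D (ev b) (E 1) = d (ev b) (E 1)"
proof -
  have "d (ev b) H1 + d (ev b) H2 = D (ev b) H1 + D (ev b) H2"
    "d (ev b) H1 + 2 * d (ev b) H2 = D (ev b) H1 + 2 * D (ev b) H2"
    using compatible[of "ev (E 2)" "ev b" "E 2"] compatible[of "ev (E 3)" "ev b" "E 3"] n_ge_4 assms
    by (simp_all add: br_RF ev_apply)
  then show "D (ev b) H1 = d (ev b) H1" "D (ev b) H2 = d (ev b) H2"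
    using two_weights_eq by metis+
  show "D (ev b) (E 1) = d (ev b) (E 1)"
    using compatible[of "ev (E 2)" "ev b" "E 3"] n_ge_4 assms by (simp add: br_RF ev_apply)
qed

lemma D_E1_shift: "D (ev (E 1)) (E (j + 1)) = D (ev H1) (E j)" if "2 \<le> j" "j + 1 \<le> n"
  using anti_leibniz[of H1 "E 1" "E (j + 1)"] n_ge_4 that by (simp add: RF_D_simps cong: if_cong)

lemma D_E1_E2: "D (ev (E 1)) (E 2) = 0"
  using anti_leibniz[of H1 "E 1" "E 2"] n_ge_4 by (simp add: RF_D_simps cong: if_cong)

lemma D_H2: "D (ev H2) (E j) = of_nat (j - 1) * D (ev H1) (E j)" if "2 \<le> j" "j \<le> n"
  using anti_leibniz[of H2 H1 "E j"] n_ge_4 that by (simp add: RF_D_simps cong: if_cong)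

lemma D_E_E: "D (ev (E i)) (E j) = 0" if "2 \<le> i" "i \<le> n" "2 \<le> j" "j \<le> n"
  using anti_leibniz[of H1 "E i" "E j"] n_ge_4 that by (simp add: RF_D_simps cong: if_cong)

text \<open>The coordinates of \<open>x\<close> are read off from \<open>d(e\<^sub>1)\<close>, \<open>d(e\<^sub>2)\<close>,
  \<open>d(h\<^sub>2)\<close> and \<open>D(h\<^sub>1) = [x, h\<^sub>1]\<close>.\<close>
definition x :: "basis \<Rightarrow> complex" where
  "x = (\<lambda>k. case k of H1 \<Rightarrow> \<alpha> - \<gamma> | H2 \<Rightarrow> - \<alpha>
     | E j \<Rightarrow> if j = 1 then \<beta> else if j = 0 then 0 else D (ev H1) (E j))"

lemma x_in_vecs: "x \<in> vecs n"
  using lin_outside_bas[OF lin_D ev_in_vecs[of H1 n]] n_ge_4 by (auto simp: vecs_def x_def split: basis.split)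

lemma d_eq_inner: "d (ev b) k = - br n (RF n) (ev b) x k" if b: "b \<in> bas n"
proof (cases b)
  case (E i)
  consider "i = 1" | "2 \<le> i" "i \<le> n"
    using b E by (cases "i = 1") auto
  then show ?thesis
  proof cases
    case 1
    then show ?thesis
      using E n_ge_4 by (auto simp add: d_E1[simplified] br_RF ev_apply x_def split: basis.split)
  next
    case 2
    have "(of_nat (i - 1) :: complex) = of_nat (i - 2) + 1"
      using 2 by simp
    with 2 show ?thesis
      using E by (cases k; cases "i = 2") (auto simp: d_E br_RF ev_apply x_def algebra_simps)
  qed
qed (use n_ge_4 in \<open>simp_all add: d_H1 d_H2 br_RF ev_apply x_def split: basis.split\<close>)

lemma D_eq_inner_E: "D (ev b) (E j) = br n (RF n) x (ev b) (E j)"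
  if b: "b \<in> bas n" and j: "2 \<le> j" "j \<le> n"
proof (cases b)
  case (E i)
  consider "i = 1" "j = 2" | "i = 1" "3 \<le> j" | "2 \<le> i" "i \<le> n"
    using b E j by (cases "i = 1"; cases "j = 2") auto
  then show ?thesis
  proof cases
    case 1
    then show ?thesis
      using E D_E1_E2 by (simp add: br_RF ev_apply)
  next
    case 2
    then show ?thesis
      using j E D_E1_shift[of "j - 1"] by (auto simp: br_RF ev_apply x_def)
  next
    case 3
    then show ?thesis
      using j E D_E_E by (simp add: br_RF ev_apply)
  qed
qed (use j D_H2 in \<open>simp_all add: br_RF ev_apply x_def\<close>)

lemma D_eq_inner: "D (ev b) k = br n (RF n) x (ev b) k" if b: "b \<in> bas n"
proof -
  consider "k \<notin> bas n" | "k \<in> {H1, H2, E 1}" | j where "k = E j" "2 \<le> j" "j \<le> n"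
  proof (cases k)
    case (E j)
    then show ?thesis
      using that by (cases "j = 1"; cases "2 \<le> j"; cases "j \<le> n") auto
  qed (use that in auto)
  then show ?thesis
  proof cases
    case 1
    then show ?thesis
      using lin_outside_bas[OF lin_D ev_in_vecs[OF b]] by (cases k) (auto simp: br_RF)
  next
    case 2
    then show ?thesis
      using D_eq_d_on_H_E1[OF b] d_on_H_E1[OF b] n_ge_4 by (auto simp: br_RF ev_apply x_def)
  next
    case 3
    then show ?thesis
      using D_eq_inner_E[OF b] by simp
  qed
qed

lemma inner: "is_inner_biderivation n (RF n) d D"
  by (rule inner_biderivationI[OF lin_d lin_D x_in_vecs d_eq_inner D_eq_inner])

end

section \<open>Biderivations of \<open>\<L>\<^sub>1\<close> and \<open>\<L>\<^sub>2\<close>\<close>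

locale L_derivation =
  fixes flag :: bool and n :: nat and d :: "(basis \<Rightarrow> complex) \<Rightarrow> basis \<Rightarrow> complex"
  assumes n_ge_4: "4 \<le> n" and derivation: "is_derivation n (Lgen flag n) d"
begin

lemma lin_d: "lin n d"
  using derivation by (simp add: is_derivation_def)

lemma d_outside_bas: "b \<in> bas n \<Longrightarrow> k \<notin> bas n \<Longrightarrow> d (ev b) k = 0"
  using lin_outside_bas[OF lin_d] by simp

lemmas leibniz = derivation_ev[OF derivation]

lemmas L_simps = br_Lgen[OF n_ge_4] lin_scl[OF lin_d] lin_zero[OF lin_d] lin_vneg[OF lin_d] Lgen_def ev_apply

definition \<alpha> where "\<alpha> = d (ev (E 1)) (E 1)"
definition \<beta> where "\<beta> = d (ev H2) (E 1)"
definition \<gamma> where "\<gamma> = d (ev (E 2)) (E 2)"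
definition \<epsilon> where "\<epsilon> = d (ev H1) (E 2)"

lemma \<epsilon>_eq_0: "\<not> flag \<Longrightarrow> \<epsilon> = 0"
  using leibniz[of H1 H1 "E 2"] n_ge_4 unfolding \<epsilon>_def by (simp add: L_simps cong: if_cong)

lemma d_H1: "d (ev H1) k = (if k = E 2 then \<epsilon> else 0)"
proof -
  have on_H: "d (ev H1) H1 = 0" "d (ev H1) H2 = 0"
    using leibniz[of "E 2" H1 "E 2"] leibniz[of "E 1" H1 "E 1"] n_ge_4 by (simp_all add: L_simps cong: if_cong)
  have on_E1: "d (ev H1) (E 1) = 0"
    using leibniz[of H1 H2 "E 1"] n_ge_4 by (simp add: L_simps cong: if_cong)
  have on_E: "d (ev H1) (E j) = 0" if "3 \<le> j" "j \<le> n" for j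
    using leibniz[of H1 H2 "E j"] n_ge_4 that by (simp add: L_simps cong: if_cong)
  show ?thesis
  proof (cases k)
    case (E j)
    then show ?thesis
      using on_E1 on_E[of j] d_outside_bas[of H1 k] n_ge_4
      by (cases "j = 1"; cases "j = 2"; cases "3 \<le> j"; cases "j \<le> n") (auto simp: \<epsilon>_def)
  qed (use on_H in simp_all)
qed

lemma d_H2: "d (ev H2) k = (if k = E 1 then \<beta> else 0)"
proof -
  have on_H: "d (ev H2) H1 = 0" "d (ev H2) H2 = 0"
    using leibniz[of "E 2" H2 "E 2"] leibniz[of "E 1" H2 "E 1"] n_ge_4 by (simp_all add: L_simps cong: if_cong)
  have on_E2: "d (ev H2) (E 2) = 0"
    using leibniz[of H2 H1 "E 2"] n_ge_4 by (simp add: L_simps d_H1 cong: if_cong)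
  have on_E: "d (ev H2) (E j) = 0" if "3 \<le> j" "j \<le> n" for j
    using leibniz[of H2 H2 "E j"] n_ge_4 that by (simp add: L_simps cong: if_cong)
  show ?thesis
  proof (cases k)
    case (E j)
    then show ?thesis
      using on_E2 on_E[of j] d_outside_bas[of H2 k] n_ge_4
      by (cases "j = 1"; cases "j = 2"; cases "3 \<le> j"; cases "j \<le> n") (auto simp: \<beta>_def)
  qed (use on_H in simp_all)
qed

lemma d_E1: "d (ev (E 1)) k = (if k = E 1 then \<alpha> else if k = E 3 then - \<beta> else 0)"
proof -
  have on_H: "d (ev (E 1)) H1 = 0" "d (ev (E 1)) H2 = 0"
    using leibniz[of "E 1" H2 H1] leibniz[of "E 1" H2 H2] n_ge_4 by (simp_all add: L_simps cong: if_cong)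
  have on_E2: "d (ev (E 1)) (E 2) = 0"
    using leibniz[of "E 1" H1 "E 2"] n_ge_4 by (simp add: L_simps d_H1 cong: if_cong)
  have on_E: "d (ev (E 1)) (E j) = (if j = 3 then - \<beta> else 0)" if "3 \<le> j" "j \<le> n" for j
  proof -
    have "j - Suc 0 \<noteq> Suc 0"
      using that by simp
    then have "of_nat 1 * d (ev (E 1)) (E j) = of_nat (j - 1) * d (ev (E 1)) (E j)
        + (if j - 1 = Suc 1 then \<beta> else 0)"
      using leibniz[of "E 1" H2 "E j"] n_ge_4 that
      by (cases "j = 3") (auto simp: L_simps d_H2 cong: if_cong)
    from weight_eq_solve[OF this] that show ?thesis
      by auto
  qed
  show ?thesis
  proof (cases k)
    case (E j)
    then show ?thesis
      using on_E2 on_E[of j] d_outside_bas[of "E 1" k] n_ge_4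
      by (cases "j = 1"; cases "j = 2"; cases "3 \<le> j"; cases "j \<le> n") (auto simp: \<alpha>_def)
  qed (use on_H in simp_all)
qed

lemma d_E2: "d (ev (E 2)) k = (if k = E 2 then \<gamma> else 0)"
proof (cases "k = E 2")
  case False
  have "d (ev (E 2)) k = br n (Lgen flag n) (d (ev (E 2))) (ev H1) k + br n (Lgen flag n) (ev (E 2)) (d (ev H1)) k"
    using leibniz[of "E 2" H1 k] n_ge_4 by (simp add: Lgen_def)
  then show ?thesis
    using False by (simp add: L_simps d_H1 split: basis.split)
qed (simp add: \<gamma>_def)

lemma d_E_H_E1_E2:
  "d (ev (E i)) H1 = 0" "d (ev (E i)) H2 = 0" "d (ev (E i)) (E 1) = 0" "d (ev (E i)) (E 2) = 0"
  if "3 \<le> i" "i \<le> n" for i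
proof -
  show "d (ev (E i)) H1 = 0" "d (ev (E i)) H2 = 0" "d (ev (E i)) (E 2) = 0"
    using leibniz[of "E i" H2 H1] leibniz[of "E i" H2 H2] leibniz[of "E i" H2 "E 2"] n_ge_4 that
    by (simp_all add: L_simps d_H2 cong: if_cong)
  have "of_nat (i - 1) * d (ev (E i)) (E 1) = of_nat 1 * d (ev (E i)) (E 1)"
    using leibniz[of "E i" H2 "E 1"] n_ge_4 that by (simp add: L_simps d_H2 cong: if_cong)
  then show "d (ev (E i)) (E 1) = 0"
    using that by (auto simp only: mult_cancel_right of_nat_eq_iff)
qed

lemma d_E_diagonal: "d (ev (E i)) (E i) = of_nat (i - 1) * \<alpha>" if "3 \<le> i" "i \<le> n"
proof -
  have "d (ev (E (Suc i))) (E (Suc i)) = d (ev (E i)) (E i) + \<alpha>" if "3 \<le> i" "i < n" for i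
  proof -
    have "i \<le> n - 1"
      using that by simp
    then show ?thesis
      using leibniz[of "E i" "E 1" "E (i + 1)"] n_ge_4 that by (simp add: L_simps d_E1 \<alpha>_def cong: if_cong)
  qed
  moreover have "d (ev (E 3)) (E 3) = 2 * \<alpha>"
    using leibniz[of "E 1" "E 1" "E 3"] n_ge_4 by (simp add: L_simps d_E1 \<alpha>_def cong: if_cong)
  ultimately show ?thesis
    using arith_progression_closed_form[of 3 n "\<lambda>i. d (ev (E i)) (E i)" \<alpha> i] that
    by (simp add: algebra_simps)
qed

lemma d_E_off_diagonal: "d (ev (E i)) (E j) = (if j = i + 1 then - \<beta> else 0)"
  if "3 \<le> i" "i \<le> n" "3 \<le> j" "j \<le> n" "j \<noteq> i"
proof -
  have "E 1 \<noteq> E i" "E (j - 1) \<noteq> E 1" "E j \<noteq> E 1" "\<not> 4 \<le> j \<longrightarrow> i \<noteq> j - Suc 0"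
    using that by auto
  then have "of_nat (i - 1) * d (ev (E i)) (E j)
      = of_nat (j - 1) * d (ev (E i)) (E j) + (if j - 1 = Suc (i - 1) then \<beta> else 0)"
    using leibniz[of "E i" H2 "E j"] n_ge_4 that by (auto simp add: L_simps d_H2 cong: if_cong)
  from weight_eq_solve[OF this] that show ?thesis
    by auto
qed

lemma d_E: "d (ev (E i)) k = (if k = E i then of_nat (i - 1) * \<alpha>
    else if k = E (i + 1) \<and> i + 1 \<le> n then - \<beta> else 0)"
  if "3 \<le> i" "i \<le> n"
proof (cases k)
  case (E j)
  show ?thesis
  proof (cases "1 \<le> j \<and> j \<le> n")
    case False
    then show ?thesis
      using d_outside_bas[of "E i" k] that E by auto
  next
    case True
    then show ?thesis
      using d_E_H_E1_E2[OF that] d_E_diagonal[OF that] d_E_off_diagonal[OF that, of j] E that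
      by (cases "j = 1"; cases "j = 2"; cases "j = i") auto
  qed
qed (use d_E_H_E1_E2[OF that] in simp_all)

lemma d_on_H_E1:
  assumes "b \<in> bas n"
  shows "d (ev b) H1 = 0" "d (ev b) H2 = 0" "d (ev b) (E 1) = (if b = H2 then \<beta> else if b = E 1 then \<alpha> else 0)"
proof -
  have "d (ev b) H1 = 0 \<and> d (ev b) H2 = 0 \<and>
    d (ev b) (E 1) = (if b = H2 then \<beta> else if b = E 1 then \<alpha> else 0)"
  proof (cases b)
    case (E i)
    then show ?thesis
      using assms d_E1[of H1] d_E1[of H2] d_E1[of "E 1"] d_E2[of H1] d_E2[of H2] d_E2[of "E 1"]
        d_E_H_E1_E2[of i]
      by (cases "i = 1"; cases "i = 2") auto
  qed (simp_all add: d_H1 d_H2)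
  then show "d (ev b) H1 = 0" "d (ev b) H2 = 0"
    "d (ev b) (E 1) = (if b = H2 then \<beta> else if b = E 1 then \<alpha> else 0)"
    by blast+
qed

end

locale L_biderivation =
  fixes flag :: bool and n :: nat and d D :: "(basis \<Rightarrow> complex) \<Rightarrow> basis \<Rightarrow> complex"
  assumes n_ge_4: "4 \<le> n" and biderivation: "is_biderivation n (Lgen flag n) d D"
begin

sublocale L_derivation flag n d
  using n_ge_4 biderivation by unfold_locales (simp_all add: is_biderivation_def)

lemma antiderivation: "is_antiderivation n (Lgen flag n) D"
  using biderivation by (simp add: is_biderivation_def)

lemma lin_D: "lin n D"
  using antiderivation by (simp add: is_antiderivation_def)

lemma compatible:
  "x \<in> vecs n \<Longrightarrow> y \<in> vecs n \<Longrightarrow> br n (Lgen flag n) x (d y) k = br n (Lgen flag n) x (D y) k"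
  using biderivation by (simp add: is_biderivation_def)

lemmas anti_leibniz = antiderivation_ev[OF antiderivation]

lemmas L_D_simps = br_Lgen[OF n_ge_4] lin_scl[OF lin_D] lin_zero[OF lin_D] lin_vneg[OF lin_D] Lgen_def ev_apply

lemma D_eq_d_on_H_E1:
  assumes "b \<in> bas n"
  shows "D (ev b) H1 = d (ev b) H1" "D (ev b) H2 = d (ev b) H2" "D (ev b) (E 1) = d (ev b) (E 1)"
  using compatible[of "ev (E 2)" "ev b" "E 2"] compatible[of "ev (E 1)" "ev b" "E 1"]
    compatible[of "ev (E 1)" "ev b" "E 3"] n_ge_4 assms
  by (simp_all add: br_Lgen[OF n_ge_4] ev_apply cong: if_cong)

lemma D_eq_d_on_E2: "flag \<Longrightarrow> b \<in> bas n \<Longrightarrow> D (ev b) (E 2) = d (ev b) (E 2)"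
  using compatible[of "ev H1" "ev b" "E 2"] n_ge_4 by (simp add: br_Lgen[OF n_ge_4] ev_apply)

lemma D_H1: "D (ev H1) (E j) = 0" if "3 \<le> j" "j \<le> n"
  using anti_leibniz[of H1 H2 "E j"] n_ge_4 that by (simp add: L_D_simps cong: if_cong)

lemma D_H2_E2: "D (ev H2) (E 2) = 0"
  using anti_leibniz[of H1 H2 "E 2"] n_ge_4 by (simp add: L_D_simps cong: if_cong)

lemma D_E1_E2: "D (ev (E 1)) (E 2) = 0"
  using anti_leibniz[of H2 "E 1" "E 2"] n_ge_4 by (simp add: L_D_simps cong: if_cong)

lemma D_E1_E3: "D (ev (E 1)) (E 3) = D (ev H2) (E 1)"
proof -
  have "- D (ev (E 1)) (E 3) = D (ev H2) (E 1) - 2 * D (ev (E 1)) (E 3)"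
    using anti_leibniz[of H2 "E 1" "E 3"] n_ge_4 by (simp add: L_D_simps cong: if_cong)
  then show ?thesis
    by (simp add: algebra_simps)
qed

lemma D_E1_E: "of_nat (j - 2) * D (ev (E 1)) (E j) = D (ev H2) (E (j - 1))" if "4 \<le> j" "j \<le> n"
proof -
  have "- D (ev (E 1)) (E j) = D (ev H2) (E (j - 1)) - of_nat (j - 1) * D (ev (E 1)) (E j)"
    using anti_leibniz[of H2 "E 1" "E j"] n_ge_4 that by (simp add: L_D_simps cong: if_cong)
  moreover have "(of_nat (j - 1) :: complex) = of_nat (j - 2) + 1"
    using that by simp
  ultimately show ?thesis
    by (simp add: algebra_simps)
qed

lemma D_E2_E2: "\<not> flag \<Longrightarrow> D (ev (E 2)) (E 2) = 0"
  using anti_leibniz[of H1 "E 2" "E 2"] n_ge_4 by (simp add: L_D_simps cong: if_cong)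

lemma D_E2_E: "D (ev (E 2)) (E j) = 0" if "3 \<le> j" "j \<le> n"
  using anti_leibniz[of "E 2" H2 "E j"] n_ge_4 that by (simp add: L_D_simps cong: if_cong)

lemma D_E_E2: "D (ev (E i)) (E 2) = 0" if "3 \<le> i" "i \<le> n"
  using anti_leibniz[of "E i" H1 "E 2"] n_ge_4 that by (simp add: L_D_simps cong: if_cong)

lemma D_E_E: "D (ev (E i)) (E j) = 0" if "3 \<le> i" "i \<le> n" "3 \<le> j" "j \<le> n"
  using anti_leibniz[of H2 "E i" "E j"] n_ge_4 that by (simp add: L_D_simps cong: if_cong)

text \<open>The coordinates of \<open>x\<close> are read off from \<open>d(e\<^sub>1)\<close>, \<open>d(e\<^sub>2)\<close>,
  \<open>d(h\<^sub>2)\<close>, \<open>D(h\<^sub>1) = [x, h\<^sub>1]\<close> and \<open>D(h\<^sub>2) = [x, h\<^sub>2]\<close>.\<close>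
definition x :: "basis \<Rightarrow> complex" where
  "x = (\<lambda>k. case k of H1 \<Rightarrow> - \<gamma> | H2 \<Rightarrow> - \<alpha>
     | E j \<Rightarrow> if j = 0 then 0 else if j = 1 then \<beta> else if j = 2 then D (ev H1) (E 2)
              else D (ev H2) (E j) / of_nat (j - 1))"

lemma x_in_vecs: "x \<in> vecs n"
  using lin_outside_bas[OF lin_D ev_in_vecs[of H2 n]] n_ge_4 by (auto simp: vecs_def x_def split: basis.split)

lemma \<epsilon>_eq: "\<epsilon> = (if flag then x (E 2) else 0)"
  using \<epsilon>_eq_0 D_eq_d_on_E2[of H1] by (auto simp: x_def \<epsilon>_def)

lemma d_eq_inner: "d (ev b) k = - br n (Lgen flag n) (ev b) x k" if b: "b \<in> bas n"
proof (cases b)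
  case (E i)
  consider "i = 1" | "i = 2" | "3 \<le> i" "i \<le> n"
    using b E by (cases "i = 1"; cases "i = 2") auto
  then show ?thesis
  proof cases
    case 1
    then show ?thesis
      using E n_ge_4 by (auto simp: d_E1[simplified] br_Lgen[OF n_ge_4] ev_apply x_def split: basis.split)
  next
    case 2
    then show ?thesis
      using E n_ge_4 by (auto simp: d_E2 br_Lgen[OF n_ge_4] ev_apply x_def split: basis.split)
  next
    case 3
    then show ?thesis
      using E by (cases k; cases "i = 3") (auto simp: d_E br_Lgen[OF n_ge_4] ev_apply x_def algebra_simps)
  qed
qed (use n_ge_4 \<epsilon>_eq in \<open>simp_all add: d_H1 d_H2 br_Lgen[OF n_ge_4] ev_apply x_def split: basis.split\<close>)

lemma D_eq_inner_E2: "D (ev b) (E 2) = br n (Lgen flag n) x (ev b) (E 2)" if b: "b \<in> bas n"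
proof (cases b)
  case (E i)
  consider "i = 1" | "i = 2" | "3 \<le> i" "i \<le> n"
    using b E by (cases "i = 1"; cases "i = 2") auto
  then show ?thesis
  proof cases
    case 1
    then show ?thesis
      using E D_E1_E2 by (simp add: br_Lgen[OF n_ge_4] ev_apply)
  next
    case 2
    then show ?thesis
      using E D_E2_E2 D_eq_d_on_E2[OF _ b] d_E2
      by (cases flag) (simp_all add: br_Lgen[OF n_ge_4] ev_apply x_def)
  next
    case 3
    then show ?thesis
      using E D_E_E2 by (simp add: br_Lgen[OF n_ge_4] ev_apply)
  qed
qed (use D_H2_E2 in \<open>simp_all add: br_Lgen[OF n_ge_4] ev_apply x_def\<close>)

lemma D_eq_inner_E: "D (ev b) (E j) = br n (Lgen flag n) x (ev b) (E j)"
  if b: "b \<in> bas n" and j: "3 \<le> j" "j \<le> n"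
proof (cases b)
  case (E i)
  consider "i = 1" "j = 3" | "i = 1" "4 \<le> j" | "i = 2" | "3 \<le> i" "i \<le> n"
    using b E j by (cases "i = 1"; cases "i = 2"; cases "j = 3") auto
  then show ?thesis
  proof cases
    case 1
    then show ?thesis
      using E D_E1_E3 D_eq_d_on_H_E1(3)[of H2] d_H2 by (simp add: br_Lgen[OF n_ge_4] ev_apply x_def)
  next
    case 2
    have "(of_nat (j - 2) :: complex) \<noteq> 0"
      unfolding of_nat_eq_0_iff using 2 by simp
    then have "D (ev (E 1)) (E j) = D (ev H2) (E (j - 1)) / of_nat (j - 2)"
      using D_E1_E[OF 2(2) j(2)] by (metis nonzero_mult_div_cancel_left)
    moreover have "j - 1 - 1 = j - 2" "j - Suc 0 \<noteq> Suc 0" "j - Suc 0 \<noteq> 2" "j \<noteq> 3"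
      using 2 by auto
    ultimately show ?thesis
      using 2 j E by (simp add: br_Lgen[OF n_ge_4] ev_apply x_def)
  next
    case 3
    then show ?thesis
      using j E D_E2_E by (simp add: br_Lgen[OF n_ge_4] ev_apply)
  next
    case 4
    then show ?thesis
      using j E D_E_E by (simp add: br_Lgen[OF n_ge_4] ev_apply)
  qed
qed (use j D_H1 in \<open>simp_all add: br_Lgen[OF n_ge_4] ev_apply x_def\<close>)

lemma D_eq_inner: "D (ev b) k = br n (Lgen flag n) x (ev b) k" if b: "b \<in> bas n"
proof -
  consider "k \<notin> bas n" | "k \<in> {H1, H2, E 1}" | "k = E 2" | j where "k = E j" "3 \<le> j" "j \<le> n"
  proof (cases k)
    case (E j)
    then show ?thesis
      using that by (cases "j = 1"; cases "j = 2"; cases "3 \<le> j"; cases "j \<le> n") auto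
  qed (use that in auto)
  then show ?thesis
  proof cases
    case 1
    then show ?thesis
      using lin_outside_bas[OF lin_D ev_in_vecs[OF b]] n_ge_4 by (cases k) (auto simp: br_Lgen[OF n_ge_4])
  next
    case 2
    then show ?thesis
      using D_eq_d_on_H_E1[OF b] d_on_H_E1[OF b] n_ge_4 by (auto simp: br_Lgen[OF n_ge_4] ev_apply x_def)
  next
    case 3
    then show ?thesis
      using D_eq_inner_E2[OF b] by simp
  next
    case 4
    then show ?thesis
      using D_eq_inner_E[OF b] by simp
  qed
qed

lemma inner: "is_inner_biderivation n (Lgen flag n) d D"
  by (rule inner_biderivationI[OF lin_d lin_D x_in_vecs d_eq_inner D_eq_inner])

end

theorem mainTheorem14:
  fixes n :: nat and s :: "basis \<Rightarrow> basis \<Rightarrow> basis \<Rightarrow> complex"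
    and d D :: "(basis \<Rightarrow> complex) \<Rightarrow> basis \<Rightarrow> complex"
  assumes "n \<ge> 4"
    and "s \<in> {RF n, L1 n, L2 n}"
    and "is_biderivation n s d D"
  shows "is_inner_biderivation n s d D"
proof -
  have "s = RF n \<or> s = Lgen True n \<or> s = Lgen False n"
    using assms(2) by (auto simp: L1_def L2_def)
  then show ?thesis
    using RF_biderivation.inner[OF RF_biderivation.intro] L_biderivation.inner[OF L_biderivation.intro] assms(1,3)
    by blast
qed

end
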